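(* Every map in $p\mathsf{Ch}^*_\mathbb{Q}$ having the right lifting property with respect to all maps in $\mathbb{I}$ also has the right lifting property with respect to all maps in $\mathbb{J}$.
   Context: $p\mathsf{Ch}^*_\mathbb{Q}=\mathsf{Fun}([0,\infty),\mathsf{Ch}^*_\mathbb{Q})$, non-negatively graded rational cochain complexes. $S^k=\mathbb{Q}$ in degree $k$; $D^k$ ($k\ge1$) is $\mathbb{Q}$ in degrees $k-1,k$ with identity differential; $D^0=0$. For $0\le s<t<\infty$, $\mathbb{S}^k_{[s,t)}$ is $0$ at $r<s$, $S^k$ at $s\le r<t$, $D^k$ at $r\ge t$; $\mathbb{S}^k_{[s,\infty)}$ is $0$ at $r<s$, $S^k$ at $r\ge s$; $\mathbb{D}^k_s$ is $0$ at $r<s$, $D^k$ at $r\ge s$ (structure maps identities/inclusions). $\mathbb{I}=\{\mathbb{S}^k_{[s,t)}\to\mathbb{D}^k_s: k\in\mathbb{N},\ 0\le s<t\le\infty\}$ and $\mathbb{J}=\{\mathbb{D}^k_t\to\mathbb{D}^k_s: k\in\mathbb{N},\ 0\le s<t<\infty\}\cup\{0\to\mathbb{D}^k_s: k\in\mathbb{N},\ 0\le s<\infty\}$ (evident inclusions). *)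

theory Defs
  imports Complex_Main "HOL-Library.Extended_Real"
begin

text \<open>A persistence (non-negatively graded) rational cochain complex, i.e. a functor
  [0,oo) -> Ch*_Q. Component at parameter r and degree n is the Q-subspace pcar X r n of
  the ambient Q-vector space 'a (scalar multiplication pscale X); pdif X r n is the
  differential from degree n to degree n+1; pstr X r r' n is the structure map from
  parameter r to parameter r' (r <= r') in degree n. Only values on carriers and for
  parameters r >= 0 matter.\<close>

record 'a pcc =
  pscale :: "rat \<Rightarrow> 'a \<Rightarrow> 'a"
  pcar :: "real \<Rightarrow> nat \<Rightarrow> 'a set"
  pdif :: "real \<Rightarrow> nat \<Rightarrow> 'a \<Rightarrow> 'a"
  pstr :: "real \<Rightarrow> real \<Rightarrow> nat \<Rightarrow> 'a \<Rightarrow> 'a"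

definition lin_on ::
  "(rat \<Rightarrow> 'a::ab_group_add \<Rightarrow> 'a) \<Rightarrow> (rat \<Rightarrow> 'b::ab_group_add \<Rightarrow> 'b) \<Rightarrow> 'a set \<Rightarrow> ('a \<Rightarrow> 'b) \<Rightarrow> bool" where
  "lin_on sa sb A f \<longleftrightarrow>
     (\<forall>x\<in>A. \<forall>y\<in>A. f (x + y) = f x + f y) \<and> (\<forall>c. \<forall>x\<in>A. f (sa c x) = sb c (f x))"

definition is_pcc :: "'a::ab_group_add pcc \<Rightarrow> bool" where
  "is_pcc X \<longleftrightarrow>
     vector_space (pscale X) \<and>
     (\<forall>r n. 0 \<le> r \<longrightarrow>
        module.subspace (pscale X) (pcar X r n) \<and>
        lin_on (pscale X) (pscale X) (pcar X r n) (pdif X r n) \<and>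
        pdif X r n ` pcar X r n \<subseteq> pcar X r (Suc n) \<and>
        (\<forall>x\<in>pcar X r n. pdif X r (Suc n) (pdif X r n x) = 0)) \<and>
     (\<forall>r r' n. 0 \<le> r \<and> r \<le> r' \<longrightarrow>
        lin_on (pscale X) (pscale X) (pcar X r n) (pstr X r r' n) \<and>
        pstr X r r' n ` pcar X r n \<subseteq> pcar X r' n \<and>
        (\<forall>x\<in>pcar X r n. pdif X r' n (pstr X r r' n x) = pstr X r r' (Suc n) (pdif X r n x))) \<and>
     (\<forall>r n. 0 \<le> r \<longrightarrow> (\<forall>x\<in>pcar X r n. pstr X r r n x = x)) \<and>
     (\<forall>r r' r'' n. 0 \<le> r \<and> r \<le> r' \<and> r' \<le> r'' \<longrightarrow>
        (\<forall>x\<in>pcar X r n. pstr X r' r'' n (pstr X r r' n x) = pstr X r r'' n x))"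

definition pmor ::
  "'a::ab_group_add pcc \<Rightarrow> 'b::ab_group_add pcc \<Rightarrow> (real \<Rightarrow> nat \<Rightarrow> 'a \<Rightarrow> 'b) \<Rightarrow> bool" where
  "pmor X Y f \<longleftrightarrow> is_pcc X \<and> is_pcc Y \<and>
     (\<forall>r n. 0 \<le> r \<longrightarrow>
        lin_on (pscale X) (pscale Y) (pcar X r n) (f r n) \<and>
        f r n ` pcar X r n \<subseteq> pcar Y r n \<and>
        (\<forall>x\<in>pcar X r n. f r (Suc n) (pdif X r n x) = pdif Y r n (f r n x))) \<and>
     (\<forall>r r' n. 0 \<le> r \<and> r \<le> r' \<longrightarrow>
        (\<forall>x\<in>pcar X r n. f r' n (pstr X r r' n x) = pstr Y r r' n (f r n x)))"

definition has_rlp ::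
  "'c::ab_group_add pcc \<Rightarrow> 'd::ab_group_add pcc \<Rightarrow> (real \<Rightarrow> nat \<Rightarrow> 'c \<Rightarrow> 'd) \<Rightarrow>
   'a::ab_group_add pcc \<Rightarrow> 'b::ab_group_add pcc \<Rightarrow> (real \<Rightarrow> nat \<Rightarrow> 'a \<Rightarrow> 'b) \<Rightarrow> bool" where
  "has_rlp A B i X Y p \<longleftrightarrow>
     (\<forall>u v. pmor A X u \<longrightarrow> pmor B Y v \<longrightarrow>
        (\<forall>r n. 0 \<le> r \<longrightarrow> (\<forall>x\<in>pcar A r n. v r n (i r n x) = p r n (u r n x))) \<longrightarrow>
        (\<exists>h. pmor B X h \<and>
           (\<forall>r n. 0 \<le> r \<longrightarrow> (\<forall>x\<in>pcar A r n. h r n (i r n x) = u r n x)) \<and>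
           (\<forall>r n. 0 \<le> r \<longrightarrow> (\<forall>x\<in>pcar B r n. p r n (h r n x) = v r n x))))"

definition Scar :: "nat \<Rightarrow> nat \<Rightarrow> rat set" where
  "Scar k n = (if n = k then UNIV else {0})"

(* D^k (k >= 1): Q in degrees k-1 and k; D^0 = 0 *)
definition Dcar :: "nat \<Rightarrow> nat \<Rightarrow> rat set" where
  "Dcar k n = (if 1 \<le> k \<and> (n = k \<or> Suc n = k) then UNIV else {0})"

definition Ddif :: "nat \<Rightarrow> nat \<Rightarrow> rat \<Rightarrow> rat" where
  "Ddif k n x = (if 1 \<le> k \<and> Suc n = k then x else 0)"

definition Sph :: "nat \<Rightarrow> real \<Rightarrow> ereal \<Rightarrow> rat pcc" where
  "Sph k s t =
     \<lparr> pscale = (*),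
       pcar = (\<lambda>r n. if r < s then {0} else if ereal r < t then Scar k n else Dcar k n),
       pdif = (\<lambda>r n x. if s \<le> r \<and> \<not> ereal r < t then Ddif k n x else 0),
       pstr = (\<lambda>r r' n x. if r' < s then 0 else if ereal r' < t then x
                         else (if x \<in> Dcar k n then x else 0)) \<rparr>"

definition Dsk :: "nat \<Rightarrow> real \<Rightarrow> rat pcc" where
  "Dsk k s =
     \<lparr> pscale = (*),
       pcar = (\<lambda>r n. if r < s then {0} else Dcar k n),
       pdif = (\<lambda>r n x. if s \<le> r then Ddif k n x else 0),
       pstr = (\<lambda>r r' n x. if s \<le> r' \<and> x \<in> Dcar k n then x else 0) \<rparr>"

definition zobj :: "rat pcc" where
  "zobj = \<lparr> pscale = (*), pcar = (\<lambda>r n. {0}), pdif = (\<lambda>r n x. 0), pstr = (\<lambda>r r' n x. 0) \<rparr>"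

definition incl :: "rat pcc \<Rightarrow> real \<Rightarrow> nat \<Rightarrow> rat \<Rightarrow> rat" where
  "incl Y r n x = (if x \<in> pcar Y r n then x else 0)"

end

theory Submission
  imports Defs
begin

(*
  Both families of J are handled at once as
  D^k_t -> D^k_s with s < t <= oo, reading D^k_oo as 0; for k = 0 everything is zero.
  For k >= 1, first lift against S^(k+1)_[s,t) -> D^(k+1)_s, where the square sends the
  top generator to 0 on [s,t) and the bottom one to the given map on [t,oo). The degree-k part
  of this lift is a cocycle on [s,t) lying over the generator of D^k_s and extending the given
  map, so together with the given map it defines a map S^k_[s,t) -> X. Lifting against
  S^k_[s,t) -> D^k_s then gives the required lift.
*)

lemma vector_space_rat: "vector_space ((*) :: rat \<Rightarrow> rat \<Rightarrow> rat)"
  by unfold_locales (auto simp: algebra_simps)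

lemma module_rat: "module ((*) :: rat \<Rightarrow> rat \<Rightarrow> rat)"
  by unfold_locales (auto simp: algebra_simps)

lemma subspace_rat_iff:
  "module.subspace ((*) :: rat \<Rightarrow> rat \<Rightarrow> rat) S \<longleftrightarrow>
     0 \<in> S \<and> (\<forall>x\<in>S. \<forall>y\<in>S. x + y \<in> S) \<and> (\<forall>c. \<forall>x\<in>S. c * x \<in> S)"
  by (simp add: module.subspace_def[OF module_rat])

lemma lin_on_zero: "lin_on sa sb A f \<Longrightarrow> 0 \<in> A \<Longrightarrow> f 0 = 0"
  unfolding lin_on_def by (metis add_0 add_cancel_right_right)

lemma is_pcc_module: "is_pcc X \<Longrightarrow> module (pscale X)"
  unfolding is_pcc_def by (simp add: vector_space_def module_def)

lemma is_pcc_level: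
  assumes "is_pcc X" "0 \<le> r"
  shows "module.subspace (pscale X) (pcar X r n)"
    and "lin_on (pscale X) (pscale X) (pcar X r n) (pdif X r n)"
  using assms by (simp_all add: is_pcc_def)

lemma is_pcc_pstr_lin_on:
  "is_pcc X \<Longrightarrow> 0 \<le> r \<Longrightarrow> r \<le> r' \<Longrightarrow> lin_on (pscale X) (pscale X) (pcar X r n) (pstr X r r' n)"
  by (simp add: is_pcc_def)

lemma is_pcc_zero_mem: "is_pcc X \<Longrightarrow> 0 \<le> r \<Longrightarrow> 0 \<in> pcar X r n"
  using is_pcc_level(1) module.subspace_0[OF is_pcc_module] by blast

lemma is_pcc_pscale_zero: "is_pcc X \<Longrightarrow> pscale X c 0 = 0"
  using module.scale_zero_right[OF is_pcc_module] by blast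

lemma is_pcc_pdif_zero: "is_pcc X \<Longrightarrow> 0 \<le> r \<Longrightarrow> pdif X r n 0 = 0"
  using lin_on_zero is_pcc_level(2) is_pcc_zero_mem by blast

lemma is_pcc_pstr_zero: "is_pcc X \<Longrightarrow> 0 \<le> r \<Longrightarrow> r \<le> r' \<Longrightarrow> pstr X r r' n 0 = 0"
  using lin_on_zero is_pcc_pstr_lin_on is_pcc_zero_mem by blast

lemma pmor_is_pcc: "pmor A B f \<Longrightarrow> is_pcc A" "pmor A B f \<Longrightarrow> is_pcc B"
  by (simp_all add: pmor_def)

lemma
  assumes "pmor A B f" "0 \<le> r"
  shows pmor_lin_on: "lin_on (pscale A) (pscale B) (pcar A r n) (f r n)"
    and pmor_pcar: "x \<in> pcar A r n \<Longrightarrow> f r n x \<in> pcar B r n"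
    and pmor_pdif: "x \<in> pcar A r n \<Longrightarrow> f r (Suc n) (pdif A r n x) = pdif B r n (f r n x)"
    and pmor_pstr: "r \<le> r' \<Longrightarrow> x \<in> pcar A r n \<Longrightarrow> f r' n (pstr A r r' n x) = pstr B r r' n (f r n x)"
  using assms by (simp_all add: pmor_def image_subset_iff)

lemma pmor_zero: "pmor A B f \<Longrightarrow> 0 \<le> r \<Longrightarrow> f r n 0 = 0"
  using lin_on_zero pmor_lin_on is_pcc_zero_mem pmor_is_pcc(1) by blast

lemma pmorI:
  assumes "is_pcc A" "is_pcc B"
    and "\<And>r n. 0 \<le> r \<Longrightarrow> lin_on (pscale A) (pscale B) (pcar A r n) (f r n)"
    and "\<And>r n x. 0 \<le> r \<Longrightarrow> x \<in> pcar A r n \<Longrightarrow> f r n x \<in> pcar B r n"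
    and "\<And>r n x. 0 \<le> r \<Longrightarrow> x \<in> pcar A r n \<Longrightarrow> f r (Suc n) (pdif A r n x) = pdif B r n (f r n x)"
    and "\<And>r r' n x. 0 \<le> r \<Longrightarrow> r \<le> r' \<Longrightarrow> x \<in> pcar A r n \<Longrightarrow>
           f r' n (pstr A r r' n x) = pstr B r r' n (f r n x)"
  shows "pmor A B f"
  unfolding pmor_def using assms by (simp add: image_subset_iff)

lemma lin_on_comp:
  assumes "lin_on sa sb A f" "lin_on sb sc B g" "f ` A \<subseteq> B"
  shows "lin_on sa sc A (g \<circ> f)"
  using assms unfolding lin_on_def by (auto simp: image_subset_iff)

lemma pmor_comp:
  assumes f: "pmor A B f" and g: "pmor B C g"
  shows "pmor A C (\<lambda>r n x. g r n (f r n x))"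
proof (rule pmorI)
  show "is_pcc A" "is_pcc C" using f g by (auto dest: pmor_is_pcc)
  fix r :: real and n assume r: "0 \<le> r"
  show "lin_on (pscale A) (pscale C) (pcar A r n) (\<lambda>x. g r n (f r n x))"
    using lin_on_comp[OF pmor_lin_on[OF f r] pmor_lin_on[OF g r]] pmor_pcar[OF f r]
    by (auto simp: comp_def)
  fix x assume x: "x \<in> pcar A r n"
  show "g r n (f r n x) \<in> pcar C r n" using pmor_pcar[OF g r pmor_pcar[OF f r x]] .
  show "g r (Suc n) (f r (Suc n) (pdif A r n x)) = pdif C r n (g r n (f r n x))"
    using pmor_pdif[OF f r x] pmor_pdif[OF g r pmor_pcar[OF f r x]] by simp
  fix r' assume "r \<le> r'"
  then show "g r' n (f r' n (pstr A r r' n x)) = pstr C r r' n (g r n (f r n x))"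
    using pmor_pstr[OF f r _ x] pmor_pstr[OF g r _ pmor_pcar[OF f r x]] by simp
qed

lemma pmor_zero_map: "is_pcc A \<Longrightarrow> is_pcc B \<Longrightarrow> pmor A B (\<lambda>r n x. 0)"
  by (rule pmorI) (auto simp: lin_on_def is_pcc_pscale_zero is_pcc_zero_mem
      is_pcc_pdif_zero is_pcc_pstr_zero)

lemma has_rlpE:
  assumes "has_rlp A B i X Y p" "pmor A X u" "pmor B Y v"
    and "\<And>r n x. 0 \<le> r \<Longrightarrow> x \<in> pcar A r n \<Longrightarrow> v r n (i r n x) = p r n (u r n x)"
  obtains h where "pmor B X h"
    and "\<And>r n x. 0 \<le> r \<Longrightarrow> x \<in> pcar A r n \<Longrightarrow> h r n (i r n x) = u r n x"
    and "\<And>r n x. 0 \<le> r \<Longrightarrow> x \<in> pcar B r n \<Longrightarrow> p r n (h r n x) = v r n x"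
proof -
  have "\<exists>h. pmor B X h \<and>
      (\<forall>r n. 0 \<le> r \<longrightarrow> (\<forall>x\<in>pcar A r n. h r n (i r n x) = u r n x)) \<and>
      (\<forall>r n. 0 \<le> r \<longrightarrow> (\<forall>x\<in>pcar B r n. p r n (h r n x) = v r n x))"
    using assms unfolding has_rlp_def by blast
  with that show thesis by blast
qed

definition Dsk_ereal :: "nat \<Rightarrow> ereal \<Rightarrow> rat pcc" where
  "Dsk_ereal k t =
     \<lparr> pscale = (*),
       pcar = (\<lambda>r n. if ereal r < t then {0} else Dcar k n),
       pdif = (\<lambda>r n x. if t \<le> ereal r then Ddif k n x else 0),
       pstr = (\<lambda>r r' n x. if t \<le> ereal r' \<and> x \<in> Dcar k n then x else 0) \<rparr>"

lemma Dsk_ereal_ereal: "Dsk_ereal k (ereal t) = Dsk k t"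
  by (simp add: Dsk_ereal_def Dsk_def not_less)

lemma Dsk_ereal_infinity: "Dsk_ereal k \<infinity> = zobj"
  by (simp add: Dsk_ereal_def zobj_def)

lemma Dsk_ereal_simps [simp]:
  "pscale (Dsk_ereal k t) = (*)"
  "pcar (Dsk_ereal k t) r n = (if ereal r < t then {0} else Dcar k n)"
  "pdif (Dsk_ereal k t) r n x = (if t \<le> ereal r then Ddif k n x else 0)"
  "pstr (Dsk_ereal k t) r r' n x = (if t \<le> ereal r' \<and> x \<in> Dcar k n then x else 0)"
  by (simp_all add: Dsk_ereal_def)

lemma Dsk_simps [simp]:
  "pscale (Dsk k s) = (*)"
  "pcar (Dsk k s) r n = (if r < s then {0} else Dcar k n)"
  "pdif (Dsk k s) r n x = (if s \<le> r then Ddif k n x else 0)"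
  "pstr (Dsk k s) r r' n x = (if s \<le> r' \<and> x \<in> Dcar k n then x else 0)"
  by (simp_all add: Dsk_def)

lemma Sph_simps [simp]:
  "pscale (Sph k s t) = (*)"
  "pcar (Sph k s t) r n = (if r < s then {0} else if ereal r < t then Scar k n else Dcar k n)"
  "pdif (Sph k s t) r n x = (if s \<le> r \<and> \<not> ereal r < t then Ddif k n x else 0)"
  "pstr (Sph k s t) r r' n x =
     (if r' < s then 0 else if ereal r' < t then x else if x \<in> Dcar k n then x else 0)"
  by (simp_all add: Sph_def)

lemma ereal_le_real_trans: "t \<le> ereal r \<Longrightarrow> r \<le> r' \<Longrightarrow> t \<le> ereal r'"
  by (erule order_trans) simp

lemma ereal_less_le_real_trans: "ereal s < t \<Longrightarrow> t \<le> ereal r \<Longrightarrow> s < r"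
  using order.strict_trans2[of "ereal s" t "ereal r"] by simp

lemma pcar_Sph_late:
  "ereal s < t \<Longrightarrow> t \<le> ereal r \<Longrightarrow> pcar (Sph k s t) r n = pcar (Dsk_ereal k t) r n"
  using ereal_less_le_real_trans[of s t r] by (simp add: leD)

lemma is_pcc_Dsk_ereal: "is_pcc (Dsk_ereal k t)"
  unfolding is_pcc_def lin_on_def
  by (auto simp: vector_space_rat subspace_rat_iff Dcar_def Ddif_def algebra_simps not_less
      dest: ereal_le_real_trans)

lemma is_pcc_Dsk: "is_pcc (Dsk k s)"
  using is_pcc_Dsk_ereal[of k "ereal s"] by (simp add: Dsk_ereal_ereal)

lemma is_pcc_Sph: "is_pcc (Sph k s t)"
  unfolding is_pcc_def lin_on_def
  by (auto simp: vector_space_rat subspace_rat_iff Dcar_def Scar_def Ddif_def algebra_simps not_less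
      dest: ereal_le_real_trans)

lemma pmor_Dsk_Suc_proj: "1 \<le> k \<Longrightarrow> pmor (Dsk (Suc k) s) (Dsk k s) (\<lambda>r n x. if n = k then x else 0)"
  by (rule pmorI[OF is_pcc_Dsk is_pcc_Dsk]) (auto simp: lin_on_def Dcar_def Ddif_def)

lemma pmor_Sph_Suc_proj:
  "1 \<le> k \<Longrightarrow> pmor (Sph (Suc k) s t) (Dsk_ereal k t) (\<lambda>r n x. if n = k \<and> t \<le> ereal r then x else 0)"
  by (rule pmorI[OF is_pcc_Sph is_pcc_Dsk_ereal])
    (auto simp: lin_on_def Dcar_def Ddif_def Scar_def not_less not_le split: if_splits
      dest: ereal_le_real_trans)

lemma pmor_Sph_glue:
  assumes X: "is_pcc X" and k: "1 \<le> k" and st: "ereal s < t"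
    and u: "pmor (Dsk_ereal k t) X u" and h: "pmor (Dsk (Suc k) s) X h"
    and h_cocycle: "\<And>r x. s \<le> r \<Longrightarrow> ereal r < t \<Longrightarrow> h r (Suc k) x = 0"
    and h_extends: "\<And>r x. t \<le> ereal r \<Longrightarrow> h r k x = u r k x"
  shows "pmor (Sph k s t) X (\<lambda>r n x. if t \<le> ereal r then u r n x else if n = k then h r k x else 0)"
proof (rule pmorI[OF is_pcc_Sph X])
  fix r :: real and n assume r: "0 \<le> r"
  consider (late) "t \<le> ereal r" "\<not> ereal r < t" "s < r"
    | (early_k) "ereal r < t" "\<not> t \<le> ereal r" "n = k"
    | (early) "ereal r < t" "\<not> t \<le> ereal r" "n \<noteq> k"
    using ereal_less_le_real_trans[OF st] by (metis not_le not_less)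
  note regions = this
  show "lin_on (pscale (Sph k s t)) (pscale X) (pcar (Sph k s t) r n)
      (\<lambda>x. if t \<le> ereal r then u r n x else if n = k then h r k x else 0)"
  proof (cases rule: regions)
    case late
    then show ?thesis using pmor_lin_on[OF u r, of n] by simp
  next
    case early_k
    then show ?thesis using pmor_lin_on[OF h r, of k] k by (auto simp: Scar_def Dcar_def)
  next
    case early
    then show ?thesis by (simp add: lin_on_def Scar_def is_pcc_pscale_zero[OF X])
  qed
  fix x assume x: "x \<in> pcar (Sph k s t) r n"
  show "(if t \<le> ereal r then u r n x else if n = k then h r k x else 0) \<in> pcar X r n"
  proof (cases rule: regions)
    case late
    then show ?thesis using pmor_pcar[OF u r, of x n] x by simp
  next
    case early_k
    then have "x \<in> pcar (Dsk (Suc k) s) r k"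
      using x k by (auto simp: Scar_def Dcar_def split: if_splits)
    then show ?thesis using pmor_pcar[OF h r, of x k] early_k by simp
  next
    case early
    then show ?thesis using is_pcc_zero_mem[OF X r] by simp
  qed
  show "(if t \<le> ereal r then u r (Suc n) (pdif (Sph k s t) r n x)
        else if Suc n = k then h r k (pdif (Sph k s t) r n x) else 0) =
      pdif X r n (if t \<le> ereal r then u r n x else if n = k then h r k x else 0)"
  proof (cases rule: regions)
    case late
    then show ?thesis using pmor_pdif[OF u r, of x n] x by simp
  next
    case early_k
    show ?thesis
    proof (cases "s \<le> r")
      case True
      then have "pdif X r k (h r k x) = h r (Suc k) x"
        using pmor_pdif[OF h r, of x k] by (simp add: Dcar_def Ddif_def)
      then show ?thesis using early_k True h_cocycle pmor_zero[OF h r] by simp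
    next
      case False
      then show ?thesis using early_k x pmor_zero[OF h r] is_pcc_pdif_zero[OF X r] by simp
    qed
  next
    case early
    then have "x = 0" using x by (auto simp: Scar_def split: if_splits)
    then show ?thesis using early pmor_zero[OF h r] is_pcc_pdif_zero[OF X r] by simp
  qed
next
  fix r r' :: real and n x
  assume r: "0 \<le> r" and rr': "r \<le> r'" and x: "x \<in> pcar (Sph k s t) r n"
  have r': "0 \<le> r'" using r rr' by simp
  show "(if t \<le> ereal r' then u r' n (pstr (Sph k s t) r r' n x)
        else if n = k then h r' k (pstr (Sph k s t) r r' n x) else 0) =
      pstr X r r' n (if t \<le> ereal r then u r n x else if n = k then h r k x else 0)"
  proof (cases "x = 0")
    case True
    then show ?thesis
      using pmor_zero[OF u] pmor_zero[OF h] is_pcc_pstr_zero[OF X r rr'] r r' by simp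
  next
    case x_nonzero: False
    show ?thesis
    proof (cases "t \<le> ereal r")
      case True
      have late: "\<not> r < s" "\<not> ereal r < t" "t \<le> ereal r'" "\<not> ereal r' < t" "s \<le> r'"
        using True ereal_le_real_trans[OF True rr'] ereal_less_le_real_trans[OF st True] rr'
        by (auto simp: not_less)
      then have "x \<in> Dcar k n" using x by (simp split: if_splits)
      then show ?thesis using pmor_pstr[OF u r rr', of x n] True late by simp
    next
      case early: False
      then have n: "n = k" and sr: "s \<le> r" and x': "x \<in> pcar (Dsk (Suc k) s) r k"
        using x x_nonzero k by (auto simp: Scar_def Dcar_def not_le split: if_splits)
      then have "pstr (Sph k s t) r r' n x = x" "pstr (Dsk (Suc k) s) r r' k x = x"
        using rr' k by (auto simp: Dcar_def)
      then show ?thesis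
        using pmor_pstr[OF h r rr' x'] h_extends early n by auto
    qed
  qed
qed

lemma incl_Sph: "1 \<le> k \<Longrightarrow> x \<in> pcar (Sph k s t) r n \<Longrightarrow> incl (Dsk k s) r n x = x"
  by (auto simp: incl_def Scar_def Dcar_def split: if_splits)

lemma incl_Dsk_ereal: "ereal s < t \<Longrightarrow> x \<in> pcar (Dsk_ereal k t) r n \<Longrightarrow> incl (Dsk k s) r n x = x"
  by (auto simp: incl_def not_less dest: order.strict_trans2 split: if_splits)

lemma obtain_cocycle_lift:
  assumes p: "pmor X Y p"
    and I: "has_rlp (Sph (Suc k) s t) (Dsk (Suc k) s) (incl (Dsk (Suc k) s)) X Y p"
    and k: "1 \<le> k" and s: "0 \<le> s" and st: "ereal s < t"
    and u: "pmor (Dsk_ereal k t) X u" and v: "pmor (Dsk k s) Y v"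
    and square: "\<And>r n x. 0 \<le> r \<Longrightarrow> x \<in> pcar (Dsk_ereal k t) r n \<Longrightarrow> v r n x = p r n (u r n x)"
  obtains h where "pmor (Dsk (Suc k) s) X h"
    and "\<And>r x. s \<le> r \<Longrightarrow> ereal r < t \<Longrightarrow> h r (Suc k) x = 0"
    and "\<And>r x. t \<le> ereal r \<Longrightarrow> h r k x = u r k x"
    and "\<And>r x. s \<le> r \<Longrightarrow> p r k (h r k x) = v r k x"
proof -
  let ?u1 = "\<lambda>r n x. u r n (if n = k \<and> t \<le> ereal r then x else 0)"
  let ?v1 = "\<lambda>r n x. v r n (if n = k then x else 0)"
  have u1: "pmor (Sph (Suc k) s t) X ?u1" using pmor_comp[OF pmor_Sph_Suc_proj[OF k] u] .
  have v1: "pmor (Dsk (Suc k) s) Y ?v1" using pmor_comp[OF pmor_Dsk_Suc_proj[OF k] v] .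
  have "?v1 r n (incl (Dsk (Suc k) s) r n x) = p r n (?u1 r n x)"
    if r: "0 \<le> r" and x: "x \<in> pcar (Sph (Suc k) s t) r n" for r n x
  proof (cases "n = k \<and> t \<le> ereal r")
    case True
    then have "x \<in> pcar (Dsk_ereal k t) r n" using k by (simp add: Dcar_def leD)
    then show ?thesis using True square[OF r] incl_Sph[OF _ x] by simp
  next
    case False
    then have "(if n = k then incl (Dsk (Suc k) s) r n x else 0) = 0"
      using x incl_Sph[OF _ x] by (auto simp: Scar_def split: if_splits)
    then show ?thesis using False pmor_zero[OF v r] pmor_zero[OF u r] pmor_zero[OF p r] by auto
  qed
  then obtain h where h: "pmor (Dsk (Suc k) s) X h"
    and h_u1: "\<And>r n x. 0 \<le> r \<Longrightarrow> x \<in> pcar (Sph (Suc k) s t) r n \<Longrightarrow>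
      h r n (incl (Dsk (Suc k) s) r n x) = ?u1 r n x"
    and h_v1: "\<And>r n x. 0 \<le> r \<Longrightarrow> x \<in> pcar (Dsk (Suc k) s) r n \<Longrightarrow> p r n (h r n x) = ?v1 r n x"
    using has_rlpE[OF I u1 v1] by blast
  show thesis
  proof (rule that[OF h])
    fix r x assume "s \<le> r" "ereal r < t"
    then show "h r (Suc k) x = 0"
      using h_u1[of r x "Suc k"] incl_Sph[of "Suc k" x s t r "Suc k"] pmor_zero[OF u] s
      by (simp add: Scar_def)
  next
    fix r x assume tr: "t \<le> ereal r"
    then have "s < r" using ereal_less_le_real_trans[OF st] by blast
    then show "h r k x = u r k x"
      using h_u1[of r x k] incl_Sph[of "Suc k" x s t r k] tr s by (simp add: Dcar_def leD)
  next
    fix r x assume "s \<le> r"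
    then show "p r k (h r k x) = v r k x" using h_v1[of r x k] s by (simp add: Dcar_def)
  qed
qed

lemma has_rlp_Dsk_ereal_0:
  assumes p: "pmor X Y p"
  shows "has_rlp (Dsk_ereal 0 t) (Dsk 0 s) i X Y p"
  unfolding has_rlp_def
proof (intro allI impI)
  fix u v assume u: "pmor (Dsk_ereal 0 t) X u" and v: "pmor (Dsk 0 s) Y v"
  have zero: "pmor (Dsk 0 s) X (\<lambda>r n x. 0)"
    using pmor_zero_map[OF is_pcc_Dsk pmor_is_pcc(1)[OF p]] .
  show "\<exists>h. pmor (Dsk 0 s) X h \<and>
      (\<forall>r n. 0 \<le> r \<longrightarrow> (\<forall>x\<in>pcar (Dsk_ereal 0 t) r n. h r n (i r n x) = u r n x)) \<and>
      (\<forall>r n. 0 \<le> r \<longrightarrow> (\<forall>x\<in>pcar (Dsk 0 s) r n. p r n (h r n x) = v r n x))"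
    using zero pmor_zero[OF u] pmor_zero[OF v] pmor_zero[OF p] by (auto simp: Dcar_def)
qed

lemma obtain_lift_from_cocycle:
  assumes p: "pmor X Y p"
    and I: "has_rlp (Sph k s t) (Dsk k s) (incl (Dsk k s)) X Y p"
    and k: "1 \<le> k" and st: "ereal s < t"
    and u: "pmor (Dsk_ereal k t) X u" and v: "pmor (Dsk k s) Y v"
    and square: "\<And>r n x. 0 \<le> r \<Longrightarrow> x \<in> pcar (Dsk_ereal k t) r n \<Longrightarrow> v r n x = p r n (u r n x)"
    and h: "pmor (Dsk (Suc k) s) X h"
    and h_cocycle: "\<And>r x. s \<le> r \<Longrightarrow> ereal r < t \<Longrightarrow> h r (Suc k) x = 0"
    and h_extends: "\<And>r x. t \<le> ereal r \<Longrightarrow> h r k x = u r k x"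
    and h_lifts: "\<And>r x. s \<le> r \<Longrightarrow> p r k (h r k x) = v r k x"
  obtains g where "pmor (Dsk k s) X g"
    and "\<And>r n x. 0 \<le> r \<Longrightarrow> x \<in> pcar (Dsk_ereal k t) r n \<Longrightarrow> g r n x = u r n x"
    and "\<And>r n x. 0 \<le> r \<Longrightarrow> x \<in> pcar (Dsk k s) r n \<Longrightarrow> p r n (g r n x) = v r n x"
proof -
  let ?w = "\<lambda>r n x. if t \<le> ereal r then u r n x else if n = k then h r k x else 0"
  have w: "pmor (Sph k s t) X ?w"
    using pmor_Sph_glue[OF pmor_is_pcc(1)[OF p] k st u h h_cocycle h_extends] .
  have "v r n (incl (Dsk k s) r n x) = p r n (?w r n x)"
    if r: "0 \<le> r" and x: "x \<in> pcar (Sph k s t) r n" for r n x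
  proof (cases "t \<le> ereal r")
    case True
    have "x \<in> pcar (Dsk_ereal k t) r n" using x unfolding pcar_Sph_late[OF st True] .
    then show ?thesis using square[OF r] incl_Sph[OF k x] True by simp
  next
    case False
    then show ?thesis
      using x incl_Sph[OF k x] h_lifts pmor_zero[OF v r] pmor_zero[OF p r] pmor_zero[OF h r]
      by (auto simp: Scar_def not_le split: if_splits)
  qed
  then obtain g where g: "pmor (Dsk k s) X g"
    and g_w: "\<And>r n x. 0 \<le> r \<Longrightarrow> x \<in> pcar (Sph k s t) r n \<Longrightarrow> g r n (incl (Dsk k s) r n x) = ?w r n x"
    and g_v: "\<And>r n x. 0 \<le> r \<Longrightarrow> x \<in> pcar (Dsk k s) r n \<Longrightarrow> p r n (g r n x) = v r n x"
    using has_rlpE[OF I w v] by blast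
  show thesis
  proof (rule that[OF g _ g_v])
    fix r n x assume r: "0 \<le> r" and x: "x \<in> pcar (Dsk_ereal k t) r n"
    show "g r n x = u r n x"
    proof (cases "t \<le> ereal r")
      case True
      have "x \<in> pcar (Sph k s t) r n" using x unfolding pcar_Sph_late[OF st True] .
      then show ?thesis using g_w[OF r] incl_Sph[OF k] True by simp
    next
      case False
      then show ?thesis using x pmor_zero[OF g r] pmor_zero[OF u r] by (simp add: not_le)
    qed
  qed
qed

lemma has_rlp_Dsk_ereal_pos:
  assumes p: "pmor X Y p"
    and I: "\<And>k t. ereal s < t \<Longrightarrow> has_rlp (Sph k s t) (Dsk k s) (incl (Dsk k s)) X Y p"
    and k: "1 \<le> k" and s: "0 \<le> s" and st: "ereal s < t"
  shows "has_rlp (Dsk_ereal k t) (Dsk k s) (incl (Dsk k s)) X Y p"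
  unfolding has_rlp_def
proof (intro allI impI)
  fix u v assume u: "pmor (Dsk_ereal k t) X u" and v: "pmor (Dsk k s) Y v"
    and "\<forall>r n. 0 \<le> r \<longrightarrow>
      (\<forall>x\<in>pcar (Dsk_ereal k t) r n. v r n (incl (Dsk k s) r n x) = p r n (u r n x))"
  then have square: "\<And>r n x. 0 \<le> r \<Longrightarrow> x \<in> pcar (Dsk_ereal k t) r n \<Longrightarrow> v r n x = p r n (u r n x)"
    using incl_Dsk_ereal[OF st] by metis
  obtain h where "pmor (Dsk (Suc k) s) X h"
    and "\<And>r x. s \<le> r \<Longrightarrow> ereal r < t \<Longrightarrow> h r (Suc k) x = 0"
    and "\<And>r x. t \<le> ereal r \<Longrightarrow> h r k x = u r k x"
    and "\<And>r x. s \<le> r \<Longrightarrow> p r k (h r k x) = v r k x"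
    using obtain_cocycle_lift[OF p I[OF st] k s st u v square] by blast
  then obtain g where "pmor (Dsk k s) X g"
    and "\<And>r n x. 0 \<le> r \<Longrightarrow> x \<in> pcar (Dsk_ereal k t) r n \<Longrightarrow> g r n x = u r n x"
    and "\<And>r n x. 0 \<le> r \<Longrightarrow> x \<in> pcar (Dsk k s) r n \<Longrightarrow> p r n (g r n x) = v r n x"
    using obtain_lift_from_cocycle[OF p I[OF st] k st u v square] by blast
  then show "\<exists>g. pmor (Dsk k s) X g \<and>
      (\<forall>r n. 0 \<le> r \<longrightarrow> (\<forall>x\<in>pcar (Dsk_ereal k t) r n. g r n (incl (Dsk k s) r n x) = u r n x)) \<and>
      (\<forall>r n. 0 \<le> r \<longrightarrow> (\<forall>x\<in>pcar (Dsk k s) r n. p r n (g r n x) = v r n x))"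
    using incl_Dsk_ereal[OF st] by metis
qed

lemma has_rlp_Dsk_ereal:
  assumes "pmor X Y p"
    and "\<And>k t. ereal s < t \<Longrightarrow> has_rlp (Sph k s t) (Dsk k s) (incl (Dsk k s)) X Y p"
    and "0 \<le> s" and "ereal s < t"
  shows "has_rlp (Dsk_ereal k t) (Dsk k s) (incl (Dsk k s)) X Y p"
proof (cases "k = 0")
  case True
  then show ?thesis using has_rlp_Dsk_ereal_0[OF assms(1)] by simp
next
  case False
  then show ?thesis using has_rlp_Dsk_ereal_pos[OF assms(1,2)] assms(3,4) by simp
qed

theorem mainTheorem9:
  fixes X :: "'a::ab_group_add pcc" and Y :: "'b::ab_group_add pcc"
    and p :: "real \<Rightarrow> nat \<Rightarrow> 'a \<Rightarrow> 'b"
  assumes "pmor X Y p"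
    and "\<forall>k s (t::ereal). 0 \<le> s \<and> ereal s < t \<longrightarrow>
           has_rlp (Sph k s t) (Dsk k s) (incl (Dsk k s)) X Y p"
  shows "(\<forall>k s t. 0 \<le> s \<and> s < t \<longrightarrow> has_rlp (Dsk k t) (Dsk k s) (incl (Dsk k s)) X Y p) \<and>
         (\<forall>k s. 0 \<le> s \<longrightarrow> has_rlp zobj (Dsk k s) (incl (Dsk k s)) X Y p)"
proof (intro conjI allI impI)
  fix k and s t :: real
  assume "0 \<le> s \<and> s < t"
  then show "has_rlp (Dsk k t) (Dsk k s) (incl (Dsk k s)) X Y p"
    using has_rlp_Dsk_ereal[OF assms(1), of s "ereal t" k] assms(2) by (simp add: Dsk_ereal_ereal)
next
  fix k and s :: real
  assume "0 \<le> s"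
  then show "has_rlp zobj (Dsk k s) (incl (Dsk k s)) X Y p"
    using has_rlp_Dsk_ereal[OF assms(1), of s \<infinity> k] assms(2) by (simp add: Dsk_ereal_infinity)
qed

end
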